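(* Let $I$ be a conditional indicator w.r.t. $\mathcal{H}$ which is conditionally convex and whose domain $\mathbb{D}_I$ is $\mathcal{H}$-decomposable. Then $I$ is regular.
   Context: Let $(\Omega,\mathcal{F},\mathbb{P})$ be a probability space with $\mathcal{F}$ complete, and $\mathcal{H}\subseteq\mathcal{F}$ a complete sub-$\sigma$-algebra. $\overline{\mathbb{R}}=\mathbb{R}\cup\{\pm\infty\}$ with conventions $r\pm\infty=\pm\infty$, $\infty-\infty=0$, $\infty+\infty=\infty$, $0\times(\pm\infty)=0$; $\mathbb{L}^0(G,\mathcal{G})$ is the set of $\mathcal{G}$-measurable random variables a.s. valued in $G$. $\operatorname{ess\,sup}_{\mathcal{H}}(X)$ is the smallest $\mathcal{H}$-measurable random variable dominating $X$ a.s., $\operatorname{ess\,inf}_{\mathcal{H}}(X)=-\operatorname{ess\,sup}_{\mathcal{H}}(-X)$. A conditional indicator w.r.t. $\mathcal{H}$ is a map $I:\mathbb{D}_I\to\mathbb{L}^0(\overline{\mathbb{R}},\mathcal{H})$, $0\in\mathbb{D}_I\subseteq\mathbb{L}^0(\overline{\mathbb{R}},\mathcal{F})$, with $I(X)\in[\operatorname{ess\,inf}_{\mathcal{H}}(X),\operatorname{ess\,sup}_{\mathcal{H}}(X)]$ a.s. and $\mathbb{D}_I+\mathbb{L}^0(\overline{\mathbb{R}},\mathcal{H})\subseteq\mathbb{D}_I$. $I$ is conditionally convex if for every $\alpha\in\mathbb{L}^0([0,1],\mathcal{H})$, $\alpha\mathbb{D}_I+(1-\alpha)\mathbb{D}_I\subseteq\mathbb{D}_I$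 and $I(\alpha X+(1-\alpha)Y)\le\alpha I(X)+(1-\alpha)I(Y)$ for $X,Y\in\mathbb{D}_I$. $\mathbb{D}_I$ is $\mathcal{H}$-decomposable if $X1_H+Y1_{\Omega\setminus H}\in\mathbb{D}_I$ for $X,Y\in\mathbb{D}_I$, $H\in\mathcal{H}$. $I$ is regular if $\mathbb{D}_I$ is $\mathcal{H}$-decomposable and for $X,Y\in\mathbb{D}_I$, $H\in\mathcal{H}$, $X1_H=Y1_H$ implies $I(X)1_H=I(Y)1_H$. *)

theory Defs
  imports "HOL-Probability.Probability"
begin

text \<open>Addition on the extended reals with the paper's convention
  r + (+/-inf) = +/-inf, inf + inf = inf, -inf + -inf = -inf, and inf - inf = 0,
  i.e. inf + (-inf) = (-inf) + inf = 0.  (The library's ereal addition instead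
  gives inf + (-inf) = inf.)  Multiplication of ereal already satisfies 0 * (+/-inf) = 0.\<close>
definition cadd :: "ereal \<Rightarrow> ereal \<Rightarrow> ereal" where
  "cadd x y = (if (x = \<infinity> \<and> y = -\<infinity>) \<or> (x = -\<infinity> \<and> y = \<infinity>) then 0 else x + y)"

definition complete_prob_sigma :: "'a measure \<Rightarrow> bool" where
  "complete_prob_sigma M \<longleftrightarrow> (\<forall>A N. N \<in> null_sets M \<longrightarrow> A \<subseteq> N \<longrightarrow> A \<in> sets M)"

definition complete_subalg :: "'a measure \<Rightarrow> 'a measure \<Rightarrow> bool" where
  "complete_subalg M H \<longleftrightarrow> space H = space M \<and> sets H \<subseteq> sets M \<and> null_sets M \<subseteq> sets H"

definition is_cond_esssup :: "'a measure \<Rightarrow> 'a measure \<Rightarrow> ('a \<Rightarrow> ereal) \<Rightarrow> ('a \<Rightarrow> ereal) \<Rightarrow> bool" where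
  "is_cond_esssup M H X Z \<longleftrightarrow> Z \<in> borel_measurable H \<and> (AE \<omega> in M. X \<omega> \<le> Z \<omega>) \<and>
     (\<forall>W \<in> borel_measurable H. (AE \<omega> in M. X \<omega> \<le> W \<omega>) \<longrightarrow> (AE \<omega> in M. Z \<omega> \<le> W \<omega>))"

definition is_cond_essinf :: "'a measure \<Rightarrow> 'a measure \<Rightarrow> ('a \<Rightarrow> ereal) \<Rightarrow> ('a \<Rightarrow> ereal) \<Rightarrow> bool" where
  "is_cond_essinf M H X Z \<longleftrightarrow> is_cond_esssup M H (\<lambda>\<omega>. - X \<omega>) (\<lambda>\<omega>. - Z \<omega>)"

text \<open>Random variables are represented by functions; elements of L^0 are
  a.s.-equivalence classes, so we require that the domain D is closed under
  a.s. modification (within F-measurable functions) and that I respects a.s. equality.\<close>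
definition cond_indicator ::
  "'a measure \<Rightarrow> 'a measure \<Rightarrow> ('a \<Rightarrow> ereal) set \<Rightarrow> (('a \<Rightarrow> ereal) \<Rightarrow> ('a \<Rightarrow> ereal)) \<Rightarrow> bool" where
  "cond_indicator M H D I \<longleftrightarrow>
     (\<lambda>\<omega>. 0) \<in> D \<and> D \<subseteq> borel_measurable M \<and>
     (\<forall>X \<in> D. \<forall>Y \<in> borel_measurable M. (AE \<omega> in M. X \<omega> = Y \<omega>) \<longrightarrow>
        Y \<in> D \<and> (AE \<omega> in M. I X \<omega> = I Y \<omega>)) \<and>
     (\<forall>X \<in> D. I X \<in> borel_measurable H) \<and>
     (\<forall>X \<in> D. \<forall>Z. is_cond_esssup M H X Z \<longrightarrow> (AE \<omega> in M. I X \<omega> \<le> Z \<omega>)) \<and>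
     (\<forall>X \<in> D. \<forall>Z. is_cond_essinf M H X Z \<longrightarrow> (AE \<omega> in M. Z \<omega> \<le> I X \<omega>)) \<and>
     (\<forall>X \<in> D. \<forall>Y \<in> borel_measurable H. (\<lambda>\<omega>. cadd (X \<omega>) (Y \<omega>)) \<in> D)"

definition cond_convex ::
  "'a measure \<Rightarrow> 'a measure \<Rightarrow> ('a \<Rightarrow> ereal) set \<Rightarrow> (('a \<Rightarrow> ereal) \<Rightarrow> ('a \<Rightarrow> ereal)) \<Rightarrow> bool" where
  "cond_convex M H D I \<longleftrightarrow>
     (\<forall>\<alpha> :: 'a \<Rightarrow> real. \<alpha> \<in> borel_measurable H \<longrightarrow> (AE \<omega> in M. 0 \<le> \<alpha> \<omega> \<and> \<alpha> \<omega> \<le> 1) \<longrightarrow>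
       (\<forall>X \<in> D. \<forall>Y \<in> D.
          (\<lambda>\<omega>. cadd (ereal (\<alpha> \<omega>) * X \<omega>) (ereal (1 - \<alpha> \<omega>) * Y \<omega>)) \<in> D \<and>
          (AE \<omega> in M. I (\<lambda>\<omega>. cadd (ereal (\<alpha> \<omega>) * X \<omega>) (ereal (1 - \<alpha> \<omega>) * Y \<omega>)) \<omega>
                 \<le> cadd (ereal (\<alpha> \<omega>) * I X \<omega>) (ereal (1 - \<alpha> \<omega>) * I Y \<omega>))))"

definition decomposable :: "'a measure \<Rightarrow> ('a \<Rightarrow> ereal) set \<Rightarrow> bool" where
  "decomposable H D \<longleftrightarrow>
     (\<forall>X \<in> D. \<forall>Y \<in> D. \<forall>A \<in> sets H.
        (\<lambda>\<omega>. cadd (X \<omega> * indicator A \<omega>) (Y \<omega> * indicator (space H - A) \<omega>)) \<in> D)"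

definition regular ::
  "'a measure \<Rightarrow> 'a measure \<Rightarrow> ('a \<Rightarrow> ereal) set \<Rightarrow> (('a \<Rightarrow> ereal) \<Rightarrow> ('a \<Rightarrow> ereal)) \<Rightarrow> bool" where
  "regular M H D I \<longleftrightarrow> decomposable H D \<and>
     (\<forall>X \<in> D. \<forall>Y \<in> D. \<forall>A \<in> sets H.
        (AE \<omega> in M. X \<omega> * indicator A \<omega> = Y \<omega> * indicator A \<omega>) \<longrightarrow>
        (AE \<omega> in M. I X \<omega> * indicator A \<omega> = I Y \<omega> * indicator A \<omega>))"

end

theory Submission
  imports Defs
begin

text \<open>Take for \<alpha> the indicator of A in conditional convexity. The convex combination W
  of X and Y is then the pasting of X on A with Y off A, and convexity gives I W \<le> I X on A.
  Pasting W on A with X off A gives back X, so also I X \<le> I W on A: hence I only sees X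
  on A. If moreover X = Y on A, then W = Y almost surely and I Y = I W = I X on A.\<close>

lemma cadd_indicator_convex_comb:
  "cadd (ereal (indicator A \<omega>) * x) (ereal (1 - indicator A \<omega>) * y) = (if \<omega> \<in> A then x else y)"
  by (simp add: cadd_def indicator_def zero_ereal_def[symmetric])

lemma cond_convex_pasting:
  assumes "cond_convex M H D I" and "A \<in> sets H" and "X \<in> D" and "Y \<in> D"
  shows "(\<lambda>\<omega>. if \<omega> \<in> A then X \<omega> else Y \<omega>) \<in> D"
    and "AE \<omega> in M. I (\<lambda>\<omega>. if \<omega> \<in> A then X \<omega> else Y \<omega>) \<omega> \<le> (if \<omega> \<in> A then I X \<omega> else I Y \<omega>)"
proof -
  have "indicator A \<in> borel_measurable H"
    using \<open>A \<in> sets H\<close> by simp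
  moreover have "AE \<omega> in M. 0 \<le> (indicator A \<omega> :: real) \<and> indicator A \<omega> \<le> (1 :: real)"
    by (simp add: indicator_def)
  ultimately have "(\<lambda>\<omega>. cadd (ereal (indicator A \<omega>) * X \<omega>) (ereal (1 - indicator A \<omega>) * Y \<omega>)) \<in> D \<and>
      (AE \<omega> in M. I (\<lambda>\<omega>. cadd (ereal (indicator A \<omega>) * X \<omega>) (ereal (1 - indicator A \<omega>) * Y \<omega>)) \<omega>
         \<le> cadd (ereal (indicator A \<omega>) * I X \<omega>) (ereal (1 - indicator A \<omega>) * I Y \<omega>))"
    using assms unfolding cond_convex_def by blast
  then show "(\<lambda>\<omega>. if \<omega> \<in> A then X \<omega> else Y \<omega>) \<in> D"
    and "AE \<omega> in M. I (\<lambda>\<omega>. if \<omega> \<in> A then X \<omega> else Y \<omega>) \<omega> \<le> (if \<omega> \<in> A then I X \<omega> else I Y \<omega>)"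
    unfolding cadd_indicator_convex_comb by simp_all
qed

lemma cond_convex_local:
  assumes "cond_convex M H D I" and "A \<in> sets H" and "X \<in> D" and "Y \<in> D"
  shows "AE \<omega> in M. \<omega> \<in> A \<longrightarrow> I (\<lambda>\<omega>. if \<omega> \<in> A then X \<omega> else Y \<omega>) \<omega> = I X \<omega>"
proof -
  define W where "W = (\<lambda>\<omega>. if \<omega> \<in> A then X \<omega> else Y \<omega>)"
  have W: "W \<in> D"
    unfolding W_def using cond_convex_pasting(1)[OF assms] .
  have "(\<lambda>\<omega>. if \<omega> \<in> A then W \<omega> else X \<omega>) = X"
    by (auto simp: W_def)
  then have "AE \<omega> in M. I X \<omega> \<le> (if \<omega> \<in> A then I W \<omega> else I X \<omega>)"
    using cond_convex_pasting(2)[OF assms(1,2) W assms(3)] by simp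
  moreover have "AE \<omega> in M. I W \<omega> \<le> (if \<omega> \<in> A then I X \<omega> else I Y \<omega>)"
    unfolding W_def using cond_convex_pasting(2)[OF assms] .
  ultimately show ?thesis
    unfolding W_def[symmetric] by eventually_elim (auto intro: order_antisym)
qed

lemma cond_indicator_AE_cong:
  assumes "cond_indicator M H D I" and "X \<in> D" and "Y \<in> D" and "AE \<omega> in M. X \<omega> = Y \<omega>"
  shows "AE \<omega> in M. I X \<omega> = I Y \<omega>"
  using assms unfolding cond_indicator_def by blast

theorem mainTheorem7:
  fixes M H :: "'a measure" and D :: "('a \<Rightarrow> ereal) set" and I :: "('a \<Rightarrow> ereal) \<Rightarrow> ('a \<Rightarrow> ereal)"
  assumes "prob_space M"
    and "complete_prob_sigma M"
    and "complete_subalg M H"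
    and "cond_indicator M H D I"
    and "cond_convex M H D I"
    and "decomposable H D"
  shows "regular M H D I"
  unfolding regular_def
proof (intro conjI ballI impI)
  show "decomposable H D" by fact
next
  fix X Y A
  assume X: "X \<in> D" and Y: "Y \<in> D" and A: "A \<in> sets H"
    and eq_on_A: "AE \<omega> in M. X \<omega> * indicator A \<omega> = Y \<omega> * indicator A \<omega>"
  define W where "W = (\<lambda>\<omega>. if \<omega> \<in> A then X \<omega> else Y \<omega>)"
  have W: "W \<in> D"
    unfolding W_def using cond_convex_pasting(1)[OF assms(5) A X Y] .
  have "AE \<omega> in M. W \<omega> = Y \<omega>"
    using eq_on_A by eventually_elim (auto simp: W_def indicator_def)
  then have "AE \<omega> in M. I W \<omega> = I Y \<omega>"
    using cond_indicator_AE_cong[OF assms(4) W Y] by blast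
  moreover have "AE \<omega> in M. \<omega> \<in> A \<longrightarrow> I W \<omega> = I X \<omega>"
    unfolding W_def using cond_convex_local[OF assms(5) A X Y] .
  ultimately show "AE \<omega> in M. I X \<omega> * indicator A \<omega> = I Y \<omega> * indicator A \<omega>"
    by eventually_elim (auto simp: indicator_def)
qed

end
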